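(* Let $\mu_1,\nu_1,\mu_2,\nu_2$ be distributions on $\mathbb{C}[x]$. Then, as formal power series, $$\eta_{\mu_1\rhd_{\nu_2}\mu_2}(z)=\frac{\eta_{\mu_2}(z)}{\eta_{\nu_2}(z)}\,\eta_{\mu_1}(\eta_{\nu_2}(z)),\qquad \eta_{\nu_1\rhd\nu_2}(z)=\eta_{\nu_1}(\eta_{\nu_2}(z)).$$ Here $\frac{\eta_{\mu_1}(\eta_{\nu_2}(z))}{\eta_{\nu_2}(z)}$ means $h(\eta_{\nu_2}(z))$ with $h(w)=\eta_{\mu_1}(w)/w$. In particular, if $\eta_{\nu_2}=0$ (for instance if $\nu_2$ corresponds to the normalized Haar measure on the unit circle), the first relation reads $\eta_{\mu_1\rhd_{\nu_2}\mu_2}(z)=\mu_1(x)\,\eta_{\mu_2}(z)$. If all distributions arise from probability measures on the unit circle $\mathbb{T}$, both relations hold as identities of analytic functions on $|z|<1$.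
   Context: A distribution is a unital linear functional $\mu$ on $\mathbb{C}[x]$. Its Cauchy transform is the formal series $G_\mu(z)=\sum_{n\ge0}\mu(x^n)z^{-n-1}$. Define $\eta_\mu(z)=1-\frac{z}{G_\mu(1/z)}$; equivalently $\eta_\mu=\psi_\mu/(1+\psi_\mu)$ with $\psi_\mu(z)=\sum_{n\ge1}\mu(x^n)z^n$. A probability measure $\mu$ on $\mathbb{T}$ is identified with the distribution $\mu(x^n)=\int_{\mathbb{T}}\zeta^n\,d\mu(\zeta)$; then $\eta_\mu$ is analytic on the unit disc. An algebraic probability space $(\mathcal{A},\varphi,\psi)$ is a unital complex algebra with two unital linear functionals. For $X\in\mathcal{A}$, $\mu_X(x^n)=\varphi(X^n)$ and $\nu_X(x^n)=\psi(X^n)$. Subalgebras $\{\mathcal{A}_i\}_{i\in I}$ (not containing the unit, with $I$ linearly ordered) are c-monotone independent if for all $X_k\in\mathcal{A}_{i_k}$: - (1) $\varphi(X_1\cdots X_n)=\varphi(X_1)\varphi(X_2\cdots X_n)$ if $i_1>i_2$; - (2) $\varphi(X_1\cdots X_n)=\varphi(X_1\cdots X_{n-1})\varphi(X_n)$ if $i_n>i_{n-1}$; - (3) $\varphi(X_1\cdots X_n)=(\varphi(X_j)-\psi(X_j))\varphi(X_1\cdots X_{j-1})\varphi(X_{j+1}\cdots X_n)+\psi(X_j)\varphi(X_1\cdots X_{j-1}X_{j+1}\cdots X_n)$ if $2\le j\le n-1$ and $i_{j-1}<i_j>i_{j+1}$; - (4) (1)–(3) also hold with $\varphi$ replaced by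 $\psi$. Multiplicative c-monotone convolution: if $X-1$ and $Y$ are c-monotone independent (the algebra of $X-1$ first), then $(\mu_{XY},\nu_{XY})=:(\mu_X\rhd_{\nu_Y}\mu_Y,\ \nu_X\rhd\nu_Y)$. The left component depends only on $\mu_X,\mu_Y,\nu_Y$. The right component is the multiplicative monotone convolution. This defines the operations for arbitrary distributions. *)

theory Defs
  imports "HOL-Analysis.Analysis" "HOL-Computational_Algebra.Formal_Power_Series" "HOL-Probability.Probability_Measure"
begin

text \<open>A distribution (unital linear functional on C[x]) is represented by its moment
  sequence m, m n = mu(x^n), with m 0 = 1.\<close>

definition distribution :: "(nat \<Rightarrow> complex) \<Rightarrow> bool" where
  "distribution m \<longleftrightarrow> m 0 = 1"

definition psi_fps :: "(nat \<Rightarrow> complex) \<Rightarrow> complex fps" where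
  "psi_fps m = Abs_fps (\<lambda>n. if n = 0 then 0 else m n)"

definition eta_fps :: "(nat \<Rightarrow> complex) \<Rightarrow> complex fps" where
  "eta_fps m = psi_fps m / (1 + psi_fps m)"

definition complex_algebra :: "(complex \<Rightarrow> 'a::ring_1 \<Rightarrow> 'a) \<Rightarrow> bool" where
  "complex_algebra sm \<longleftrightarrow>
     (\<forall>c x y. sm c (x + y) = sm c x + sm c y) \<and>
     (\<forall>c d x. sm (c + d) x = sm c x + sm d x) \<and>
     (\<forall>c d x. sm (c * d) x = sm c (sm d x)) \<and>
     (\<forall>x. sm 1 x = x) \<and>
     (\<forall>c x y. sm c (x * y) = sm c x * y) \<and>
     (\<forall>c x y. sm c (x * y) = x * sm c y)"

definition unital_functional :: "(complex \<Rightarrow> 'a::ring_1 \<Rightarrow> 'a) \<Rightarrow> ('a \<Rightarrow> complex) \<Rightarrow> bool" where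
  "unital_functional sm f \<longleftrightarrow>
     (\<forall>x y. f (x + y) = f x + f y) \<and> (\<forall>c x. f (sm c x) = c * f x) \<and> f 1 = 1"

definition alg_prob_space ::
  "(complex \<Rightarrow> 'a::ring_1 \<Rightarrow> 'a) \<Rightarrow> ('a \<Rightarrow> complex) \<Rightarrow> ('a \<Rightarrow> complex) \<Rightarrow> bool" where
  "alg_prob_space sm \<phi> \<psi> \<longleftrightarrow>
     complex_algebra sm \<and> unital_functional sm \<phi> \<and> unital_functional sm \<psi>"

definition nonunital_subalgebra :: "(complex \<Rightarrow> 'a::ring_1 \<Rightarrow> 'a) \<Rightarrow> 'a set \<Rightarrow> bool" where
  "nonunital_subalgebra sm S \<longleftrightarrow>
     0 \<in> S \<and> (\<forall>x\<in>S. \<forall>y\<in>S. x + y \<in> S \<and> x * y \<in> S) \<and>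
     (\<forall>c. \<forall>x\<in>S. sm c x \<in> S) \<and> 1 \<notin> S"

definition distr :: "('a::monoid_mult \<Rightarrow> complex) \<Rightarrow> 'a \<Rightarrow> nat \<Rightarrow> complex" where
  "distr f X = (\<lambda>n. f (X ^ n))"

text \<open>Rules (1)--(3) of c-monotone independence for a pair of functionals (f, g):
  f plays the role of phi and g the role of psi.  Words X_1...X_n are lists xs with
  index lists is (0-based), xs!k in A (is!k), is!k in I.\<close>
definition cmono_rules ::
  "('a::ring_1 \<Rightarrow> complex) \<Rightarrow> ('a \<Rightarrow> complex) \<Rightarrow> 'i::linorder set \<Rightarrow> ('i \<Rightarrow> 'a set) \<Rightarrow> bool" where
  "cmono_rules f g I A \<longleftrightarrow>
    (\<forall>xs is. length is = length xs \<and> set is \<subseteq> I \<and> (\<forall>k<length xs. xs ! k \<in> A (is ! k)) \<longrightarrow>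
      (let n = length xs in
        (2 \<le> n \<and> is ! 1 < is ! 0 \<longrightarrow>
            f (prod_list xs) = f (xs ! 0) * f (prod_list (drop 1 xs))) \<and>
        (2 \<le> n \<and> is ! (n - 2) < is ! (n - 1) \<longrightarrow>
            f (prod_list xs) = f (prod_list (take (n - 1) xs)) * f (xs ! (n - 1))) \<and>
        (\<forall>j. 1 \<le> j \<and> j + 2 \<le> n \<and> is ! (j - 1) < is ! j \<and> is ! (j + 1) < is ! j \<longrightarrow>
            f (prod_list xs) =
              (f (xs ! j) - g (xs ! j)) * f (prod_list (take j xs)) * f (prod_list (drop (j + 1) xs))
              + g (xs ! j) * f (prod_list (take j xs @ drop (j + 1) xs)))))"

definition c_monotone_independent ::
  "(complex \<Rightarrow> 'a::ring_1 \<Rightarrow> 'a) \<Rightarrow> ('a \<Rightarrow> complex) \<Rightarrow> ('a \<Rightarrow> complex) \<Rightarrow>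
   'i::linorder set \<Rightarrow> ('i \<Rightarrow> 'a set) \<Rightarrow> bool" where
  "c_monotone_independent sm \<phi> \<psi> I A \<longleftrightarrow>
     (\<forall>i\<in>I. nonunital_subalgebra sm (A i)) \<and>
     cmono_rules \<phi> \<psi> I A \<and> cmono_rules \<psi> \<psi> I A"

definition prob_on_circle :: "complex measure \<Rightarrow> bool" where
  "prob_on_circle M \<longleftrightarrow> prob_space M \<and> sets M = sets borel \<and> emeasure M (- sphere 0 1) = 0"

definition moments :: "complex measure \<Rightarrow> nat \<Rightarrow> complex" where
  "moments M n = (\<integral>\<zeta>. \<zeta> ^ n \<partial>M)"

definition psi_meas :: "complex measure \<Rightarrow> complex \<Rightarrow> complex" where
  "psi_meas M z = (\<integral>\<zeta>. z * \<zeta> / (1 - z * \<zeta>) \<partial>M)"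

definition eta_meas :: "complex measure \<Rightarrow> complex \<Rightarrow> complex" where
  "eta_meas M z = psi_meas M z / (1 + psi_meas M z)"

end

theory Submission
  imports Defs "HOL-Complex_Analysis.Laurent_Convergence"
begin

text \<open>
  Write \<open>X = 1 + a\<close> with \<open>a\<close> in the first algebra, so that \<open>XY = Y + aY\<close>. Splitting
  \<open>Y (Y + aY)^m\<close> at its first letter \<open>a\<close> and applying the c-monotone rules (the power
  \<open>Y^i\<close> in front of it is then a peak) gives, for \<open>f = \<phi>\<close> or \<open>\<psi>\<close>, a linear recursion for
  \<open>Q e m = f (a^e Y (Y + aY)^m)\<close>. Its generating functions are \<open>K \<cdot> T\<^sub>e(B)\<close>, where
  \<open>B\<close> is the \<open>\<psi>\<close>-moment series of \<open>Y\<close> and \<open>T\<^sub>e\<close> the \<open>e\<close>-th tail of the \<open>f\<close>-moment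
  series \<open>T\<close> of \<open>a\<close>; eliminating \<open>K\<close> gives \<open>\<eta>\<^sub>X\<^sub>Y \<cdot> T(B) = \<eta>\<^sub>Y \<cdot> (T + T\<^sub>1)(B)\<close>.
  The case \<open>Y = 1\<close> reads \<open>\<eta>\<^sub>X(z) \<cdot> T(V) = z \<cdot> (T + T\<^sub>1)(V)\<close> with \<open>V = z/(1 - z)\<close>,
  and since \<open>V \<circ> (B/(1 + B)) = B\<close> the unknown \<open>T\<close> cancels between the two.

  For measures on the circle \<open>Re psi_meas > -1/2\<close> on the unit disc, so the \<open>\<eta>\<close>-transforms
  are holomorphic self-maps of the disc with the formal \<open>\<eta>\<close>-transforms as Taylor series, and
  the formal identities extend to the whole disc by analytic continuation.
\<close>

section \<open>Formal \<open>\<eta>\<close>-transforms\<close>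

lemma psi_fps_nth: "psi_fps m $ n = (if n = 0 then 0 else m n)"
  by (simp add: psi_fps_def)

lemma eta_fps_mult_one_plus_psi_fps: "eta_fps m * (1 + psi_fps m) = psi_fps m"
  by (simp add: eta_fps_def fps_divide_unit psi_fps_nth mult.assoc inverse_mult_eq_1)

lemma one_plus_psi_fps_neq_0: "1 + psi_fps m \<noteq> 0"
  by (metis fps_add_nth fps_one_nth one_neq_zero add_0_right fps_zero_nth psi_fps_nth)

lemma eta_fps_eqI:
  assumes "E * (1 + psi_fps m) = psi_fps m"
  shows "E = eta_fps m"
  using assms eta_fps_mult_one_plus_psi_fps[of m] one_plus_psi_fps_neq_0[of m]
  by (metis mult_right_cancel)

lemma eta_fps_nth_0 [simp]: "eta_fps m $ 0 = 0"
  by (simp add: eta_fps_def fps_divide_unit psi_fps_nth)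

lemma eta_fps_nth_1: "eta_fps m $ 1 = m 1"
proof -
  have "(eta_fps m * (1 + psi_fps m)) $ 1 = psi_fps m $ 1"
    by (simp only: eta_fps_mult_one_plus_psi_fps)
  then show ?thesis by (simp add: fps_mult_nth psi_fps_nth)
qed

lemma eta_fps_const_one: "eta_fps (\<lambda>_. 1) = fps_X"
  by (rule eta_fps_eqI[symmetric]) (rule fps_ext, simp add: psi_fps_nth)

lemma psi_fps_const_one_compose_eta_fps: "psi_fps (\<lambda>_. 1) oo eta_fps b = psi_fps b"
proof -
  define u where "u = eta_fps b"
  have u0: "u $ 0 = 0" by (simp add: u_def)
  have "psi_fps (\<lambda>_. 1) = fps_X * (1 + psi_fps (\<lambda>_. 1 :: complex))"
    by (rule fps_ext) (simp add: psi_fps_nth)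
  then have "psi_fps (\<lambda>_. 1) * (1 - fps_X) = (fps_X :: complex fps)"
    by (simp add: algebra_simps)
  then have "(psi_fps (\<lambda>_. 1) oo u) * (1 - u) = u"
    using arg_cong[of _ _ "\<lambda>F. F oo u"] u0
    by (metis fps_compose_mult_distrib fps_compose_sub_distrib fps_compose_1 fps_X_fps_compose_startby0)
  moreover have "(1 - u) * (1 + psi_fps b) = 1"
    using eta_fps_mult_one_plus_psi_fps[of b] by (simp add: u_def algebra_simps)
  ultimately have "psi_fps (\<lambda>_. 1) oo u = u * (1 + psi_fps b)"
    by (metis mult.assoc mult.right_neutral)
  then show ?thesis by (simp add: u_def eta_fps_mult_one_plus_psi_fps)
qed

lemma fps_X_mult_shift_eta_fps: "fps_X * fps_shift 1 (eta_fps m) = eta_fps m"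
  by (rule fps_ext) simp

lemma shift_eta_fps_compose_eta_fps:
  assumes "eta_fps m * (T oo psi_fps (\<lambda>_. 1)) = fps_X * (S oo psi_fps (\<lambda>_. 1))"
  shows "(fps_shift 1 (eta_fps m) oo eta_fps b) * (T oo psi_fps b) = S oo psi_fps b"
proof -
  define V where "V = psi_fps (\<lambda>_. 1 :: complex)"
  have V0: "V $ 0 = 0" by (simp add: V_def psi_fps_nth)
  have "fps_X * (fps_shift 1 (eta_fps m) * (T oo V)) = fps_X * (S oo V)"
    using assms by (simp only: V_def mult.assoc [symmetric] fps_X_mult_shift_eta_fps)
  then have "fps_shift 1 (eta_fps m) * (T oo V) = S oo V"
    by simp
  then have "(fps_shift 1 (eta_fps m) oo eta_fps b) * ((T oo V) oo eta_fps b) = (S oo V) oo eta_fps b"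
    by (metis eta_fps_nth_0 fps_compose_mult_distrib)
  then show ?thesis
    using V0 by (simp add: fps_compose_assoc [symmetric] V_def psi_fps_const_one_compose_eta_fps)
qed

section \<open>The moment recursion\<close>

lemma fps_shift_unfold:
  fixes F :: "'a::comm_ring_1 fps"
  shows "fps_shift e F = fps_const (F $ e) + fps_X * fps_shift (Suc e) F"
  by (rule fps_ext) (simp add: fps_X_mult_nth)

lemma fps_eq_0_of_chain:
  fixes D :: "nat \<Rightarrow> 'a::comm_ring_1 fps" and B :: "'a fps"
  assumes chain: "\<And>e. D e = B * D (Suc e)" and B0: "B $ 0 = 0"
  shows "D e = 0"
proof -
  have "\<forall>e. D e $ n = 0" for n
  proof (induction n rule: less_induct)
    case (less n)
    show ?case
    proof
      fix e
      have "D e $ n = (\<Sum>i=0..n. B $ i * D (Suc e) $ (n - i))"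
        by (subst chain) (simp add: fps_mult_nth)
      also have "\<dots> = 0"
      proof (intro sum.neutral ballI)
        fix i assume "i \<in> {0..n}"
        then show "B $ i * D (Suc e) $ (n - i) = 0"
          using less B0 by (cases "i = 0") auto
      qed
      finally show "D e $ n = 0" .
    qed
  qed
  then show ?thesis by (simp add: fps_ext)
qed

lemma psi_fps_mult_X_nth_Suc:
  "(psi_fps b * (fps_X * Abs_fps q)) $ Suc m = (\<Sum>i=1..m. b i * q (m - i))"
proof -
  have "(psi_fps b * (fps_X * Abs_fps q)) $ Suc m
      = (\<Sum>i=1..m. psi_fps b $ i * (fps_X * Abs_fps q) $ (Suc m - i))"
    by (subst fps_mult_nth) (simp add: sum.atLeast0_atMost_Suc sum.atLeast_Suc_atMost psi_fps_nth)
  also have "\<dots> = (\<Sum>i=1..m. b i * q (m - i))"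
    by (intro sum.cong) (auto simp: psi_fps_nth Suc_diff_le)
  finally show ?thesis .
qed

lemma generating_function_of_recursion:
  fixes Q :: "nat \<Rightarrow> nat \<Rightarrow> complex"
  assumes rec: "\<And>e m. Q e m = p e * c (Suc m) +
     (\<Sum>i=1..m. (c i - b i) * p e * Q 1 (m - i) + b i * Q (Suc e) (m - i))"
  defines "G e \<equiv> fps_X * Abs_fps (Q e)"
  shows "G e = (psi_fps c + (psi_fps c - psi_fps b) * G 1) * (fps_shift e (Abs_fps p) oo psi_fps b)"
proof -
  define K where "K = psi_fps c + (psi_fps c - psi_fps b) * G 1"
  define B where "B = psi_fps b"
  have B0: "B $ 0 = 0" by (simp add: B_def psi_fps_nth)
  have G_rec: "G e = fps_const (p e) * K + B * G (Suc e)" for e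
  proof (rule fps_ext)
    fix n
    show "G e $ n = (fps_const (p e) * K + B * G (Suc e)) $ n"
    proof (cases n)
      case (Suc m)
      have "psi_fps c - psi_fps b = psi_fps (\<lambda>i. c i - b i)"
        by (rule fps_ext) (simp add: psi_fps_nth)
      then have "(fps_const (p e) * K + B * G (Suc e)) $ n =
          p e * (c (Suc m) + (\<Sum>i=1..m. (c i - b i) * Q 1 (m - i))) + (\<Sum>i=1..m. b i * Q (Suc e) (m - i))"
        by (simp add: Suc K_def B_def G_def psi_fps_mult_X_nth_Suc psi_fps_nth)
      also have "\<dots> = Q e m"
        by (simp add: rec[of e m] sum_distrib_left sum.distrib sum_subtractf algebra_simps)
      finally show ?thesis by (simp add: Suc G_def)
    qed (simp add: G_def K_def B_def psi_fps_nth)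
  qed
  define D where "D e = G e - K * (fps_shift e (Abs_fps p) oo B)" for e
  have "D e = B * D (Suc e)" for e
    unfolding D_def G_rec[of e] fps_shift_unfold[of e] using B0
    by (simp add: fps_compose_add_distrib fps_compose_mult_distrib algebra_simps)
  then have "D e = 0" by (rule fps_eq_0_of_chain) (fact B0)
  then show ?thesis by (simp add: D_def K_def B_def)
qed

lemma perturbed_power_expansion:
  fixes a Y :: "'a::ring_1"
  shows "Y * (Y + a * Y) ^ m = Y ^ Suc m + (\<Sum>i=1..m. Y ^ i * a * (Y * (Y + a * Y) ^ (m - i)))"
proof -
  define W where "W = Y + a * Y"
  define F where "F k = Y ^ Suc k * W ^ (m - k)" for k
  have "Y ^ i * a * (Y * W ^ (m - i)) = - (F i - F (i - 1))" if "i \<in> {1..m}" for i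
  proof -
    have "m - (i - 1) = Suc (m - i)" using that by auto
    then have "F (i - 1) = Y ^ i * (W * W ^ (m - i))"
      using that by (simp add: F_def)
    then show ?thesis
      by (simp add: F_def W_def algebra_simps power_Suc2 mult.assoc del: power_Suc)
  qed
  then have "(\<Sum>i=1..m. Y ^ i * a * (Y * W ^ (m - i))) = - (\<Sum>i=Suc 0..m. F i - F (i - 1))"
    by (simp flip: sum_negf)
  also have "\<dots> = F 0 - F m"
    using sum_telescope''[of 0 m F] by simp
  finally show ?thesis by (simp add: F_def W_def)
qed

lemma moment_recursion:
  fixes f :: "'a::ring_1 \<Rightarrow> complex"
  assumes "Modules.additive f"
    and peak: "\<And>e i j. 1 \<le> i \<Longrightarrow> f (a ^ e * Y ^ i * a * (Y * (Y + a * Y) ^ j)) =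
      (c i - b i) * f (a ^ e) * f (a * (Y * (Y + a * Y) ^ j)) + b i * f (a ^ Suc e * (Y * (Y + a * Y) ^ j))"
    and right: "\<And>e k. 1 \<le> k \<Longrightarrow> f (a ^ e * Y ^ k) = f (a ^ e) * c k"
  shows "f (a ^ e * (Y * (Y + a * Y) ^ m)) = f (a ^ e) * c (Suc m) +
     (\<Sum>i=1..m. (c i - b i) * f (a ^ e) * f (a * (Y * (Y + a * Y) ^ (m - i)))
                + b i * f (a ^ Suc e * (Y * (Y + a * Y) ^ (m - i))))"
proof -
  interpret additive f by fact
  have "a ^ e * (Y * (Y + a * Y) ^ m) =
      a ^ e * Y ^ Suc m + (\<Sum>i=1..m. a ^ e * Y ^ i * a * (Y * (Y + a * Y) ^ (m - i)))"
    by (subst perturbed_power_expansion) (simp add: distrib_left sum_distrib_left mult.assoc)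
  then have "f (a ^ e * (Y * (Y + a * Y) ^ m)) = f (a ^ e * Y ^ Suc m) +
      (\<Sum>i=1..m. f (a ^ e * Y ^ i * a * (Y * (Y + a * Y) ^ (m - i))))"
    by (simp only: add sum)
  then show ?thesis
    by (simp add: right peak del: power_Suc)
qed

lemma eta_fps_mult_eq_of_factorization:
  fixes K B P s :: "complex fps"
  assumes psi: "psi_fps m = K * (P + s)"
    and K: "K = psi_fps c + (psi_fps c - B) * (K * s)"
    and P: "P = 1 + B * s"
  shows "eta_fps m * P = eta_fps c * (P + s)"
proof -
  define D where "D = 1 - (psi_fps c - B) * s"
  have KD: "K * D = psi_fps c"
    using K by (simp add: D_def algebra_simps)
  have "(1 + psi_fps m) * D = D + (K * D) * (P + s)"
    by (simp add: psi algebra_simps)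
  also have "\<dots> = P * (1 + psi_fps c)"
    by (simp only: KD) (simp add: D_def P algebra_simps)
  finally have *: "(1 + psi_fps m) * D = P * (1 + psi_fps c)" .
  have "eta_fps m * P * (1 + psi_fps c) = eta_fps m * (1 + psi_fps m) * D"
    by (simp add: * mult.assoc)
  also have "\<dots> = K * D * (P + s)"
    by (simp only: eta_fps_mult_one_plus_psi_fps) (simp only: psi mult_ac)
  also have "\<dots> = psi_fps c * (P + s)"
    by (simp only: KD)
  also have "\<dots> = eta_fps c * (P + s) * (1 + psi_fps c)"
    by (simp add: eta_fps_mult_one_plus_psi_fps mult.commute mult.left_commute)
  finally show ?thesis
    using one_plus_psi_fps_neq_0[of c] by simp
qed

lemma eta_fps_perturbed_product:
  fixes f :: "'a::ring_1 \<Rightarrow> complex"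
  assumes "Modules.additive f" and unital: "f 1 = 1"
    and peak: "\<And>e i j. 1 \<le> i \<Longrightarrow> f (a ^ e * Y ^ i * a * (Y * (Y + a * Y) ^ j)) =
      (c i - b i) * f (a ^ e) * f (a * (Y * (Y + a * Y) ^ j)) + b i * f (a ^ Suc e * (Y * (Y + a * Y) ^ j))"
    and right: "\<And>e k. 1 \<le> k \<Longrightarrow> f (a ^ e * Y ^ k) = f (a ^ e) * c k"
  defines "T \<equiv> Abs_fps (\<lambda>e. f (a ^ e))"
  shows "eta_fps (\<lambda>n. f ((Y + a * Y) ^ n)) * (T oo psi_fps b) =
           eta_fps c * ((T + fps_shift 1 T) oo psi_fps b)"
proof -
  interpret additive f by fact
  define Q where "Q e m = f (a ^ e * (Y * (Y + a * Y) ^ m))" for e m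
  define G where "G e = fps_X * Abs_fps (Q e)" for e
  define K where "K = psi_fps c + (psi_fps c - psi_fps b) * G 1"
  define s where "s = fps_shift 1 T oo psi_fps b"
  have rec: "Q e m = f (a ^ e) * c (Suc m) +
     (\<Sum>i=1..m. (c i - b i) * f (a ^ e) * Q 1 (m - i) + b i * Q (Suc e) (m - i))" for e m
    unfolding Q_def using moment_recursion[OF assms(1) peak right] by simp
  have G: "G e = K * (fps_shift e T oo psi_fps b)" for e
    unfolding G_def K_def T_def
    by (rule generating_function_of_recursion[of Q "\<lambda>e. f (a ^ e)", OF rec])
  have P: "T oo psi_fps b = 1 + psi_fps b * s"
    using arg_cong[OF fps_shift_unfold[of 0 T], of "\<lambda>F. F oo psi_fps b"] unital
    by (simp add: s_def T_def fps_compose_add_distrib fps_compose_mult_distrib psi_fps_nth)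
  have "psi_fps (\<lambda>n. f ((Y + a * Y) ^ n)) = G 0 + G 1"
  proof (rule fps_ext)
    fix n show "psi_fps (\<lambda>n. f ((Y + a * Y) ^ n)) $ n = (G 0 + G 1) $ n"
    proof (cases n)
      case (Suc m)
      have "(Y + a * Y) ^ Suc m = Y * (Y + a * Y) ^ m + a * (Y * (Y + a * Y) ^ m)"
        by (simp add: algebra_simps)
      then show ?thesis by (simp add: Suc psi_fps_nth G_def Q_def add)
    qed (simp add: psi_fps_nth G_def)
  qed
  then have "psi_fps (\<lambda>n. f ((Y + a * Y) ^ n)) = K * ((T oo psi_fps b) + s)"
    by (simp add: G s_def algebra_simps)
  moreover have "K = psi_fps c + (psi_fps c - psi_fps b) * (K * s)"
    by (subst K_def) (simp add: G s_def)
  ultimately show ?thesis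
    using P by (simp add: eta_fps_mult_eq_of_factorization s_def fps_compose_add_distrib)
qed

lemma eta_fps_one_plus:
  fixes f :: "'a::ring_1 \<Rightarrow> complex" and a :: 'a
  assumes "Modules.additive f" and "f 1 = 1"
  defines "T \<equiv> Abs_fps (distr f a)"
  shows "eta_fps (distr f (1 + a)) * (T oo psi_fps (\<lambda>_. 1)) =
           fps_X * ((T + fps_shift 1 T) oo psi_fps (\<lambda>_. 1))"
proof -
  \<comment> \<open>for \<open>Y = 1\<close> and \<open>c = b = 1\<close> the peak rule reduces to this, the other rule is trivial\<close>
  have "f (a ^ e * (a * z)) = f (a * (a ^ e * z))" for e z
    by (metis mult.assoc power_commutes)
  then show ?thesis
    using eta_fps_perturbed_product[OF assms(1,2), of a 1 "\<lambda>_. 1" "\<lambda>_. 1"]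
    by (simp add: T_def distr_def eta_fps_const_one mult.assoc)
qed

section \<open>c-monotone independence on words\<close>

lemma nonunital_subalgebra_power:
  assumes "nonunital_subalgebra sm S" "x \<in> S" "1 \<le> n"
  shows "x ^ n \<in> S"
  using assms(3)
proof (induction n rule: dec_induct)
  case (step n)
  then show ?case
    using assms(1,2) by (simp add: nonunital_subalgebra_def power_Suc2 del: power_Suc)
qed (use assms(2) in simp)

lemma cmono_rulesD:
  assumes "cmono_rules f g I A" "list_all2 (\<lambda>x i. x \<in> A i) xs is" "set is \<subseteq> I"
  shows "2 \<le> length xs \<Longrightarrow> is ! 1 < is ! 0 \<Longrightarrow>
           f (prod_list xs) = f (xs ! 0) * f (prod_list (drop 1 xs))"
    and "2 \<le> length xs \<Longrightarrow> is ! (length xs - 2) < is ! (length xs - 1) \<Longrightarrow>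
           f (prod_list xs) = f (prod_list (take (length xs - 1) xs)) * f (xs ! (length xs - 1))"
    and "1 \<le> j \<Longrightarrow> j + 2 \<le> length xs \<Longrightarrow> is ! (j - 1) < is ! j \<Longrightarrow> is ! (j + 1) < is ! j \<Longrightarrow>
           f (prod_list xs) =
             (f (xs ! j) - g (xs ! j)) * f (prod_list (take j xs)) * f (prod_list (drop (j + 1) xs))
             + g (xs ! j) * f (prod_list (take j xs @ drop (j + 1) xs))"
  using assms unfolding cmono_rules_def Let_def list_all2_conv_all_nth by metis+

text \<open>The rules of c-monotone independence are stated for single words; \<open>word_sum\<close> is what
  they extend to by additivity.\<close>

inductive word_sum :: "'a::ring_1 set \<Rightarrow> 'a \<Rightarrow> bool" for S where
  word: "set ws \<subseteq> S \<Longrightarrow> word_sum S (prod_list ws)"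
| add: "word_sum S x \<Longrightarrow> word_sum S y \<Longrightarrow> word_sum S (x + y)"

lemma word_sum_mult_word:
  assumes "word_sum S x" "set vs \<subseteq> S"
  shows "word_sum S (x * prod_list vs)"
  using assms
proof (induction rule: word_sum.induct)
  case (word ws)
  then show ?case using word_sum.word[of "ws @ vs" S] by simp
qed (simp add: distrib_right word_sum.add)

lemma word_sum_perturbed_power:
  assumes "a \<in> S" "Y \<in> S"
  shows "word_sum S (Y * (Y + a * Y) ^ j)"
proof (induction j)
  case 0
  then show ?case using word_sum.word[of "[Y]" S] assms by simp
next
  case (Suc j)
  have "Y * (Y + a * Y) ^ Suc j = Y * (Y + a * Y) ^ j * prod_list [Y] + Y * (Y + a * Y) ^ j * prod_list [a, Y]"
    by (simp add: power_Suc2 distrib_left mult.assoc del: power_Suc)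
  then show ?case
    using word_sum.add[OF word_sum_mult_word[OF Suc, of "[Y]"] word_sum_mult_word[OF Suc, of "[a, Y]"]]
      assms by simp
qed

text \<open>\<open>f\<close> is one of \<open>\<phi>\<close>, \<open>\<psi>\<close>; in both cases \<open>g\<close> is \<open>\<psi>\<close>.\<close>

locale c_monotone_functional =
  fixes sm :: "complex \<Rightarrow> 'a::ring_1 \<Rightarrow> 'a" and f g :: "'a \<Rightarrow> complex" and A1 A2 :: "'a set"
  assumes rules: "cmono_rules f g {1::nat, 2} (\<lambda>i. if i = 1 then A1 else A2)"
    and subalgebra1: "nonunital_subalgebra sm A1" and subalgebra2: "nonunital_subalgebra sm A2"
    and f_additive: "Modules.additive f" and f_unital: "f 1 = 1"
begin

interpretation additive f by (fact f_additive)

abbreviation "letter x i \<equiv> x \<in> (if i = (1::nat) then A1 else A2)"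

lemma labelled_word:
  "set ws \<subseteq> A1 \<union> A2 \<Longrightarrow> list_all2 letter ws (map (\<lambda>x. if x \<in> A1 then 1 else 2) ws)"
  by (induction ws) auto

lemma set_labels: "set (map (\<lambda>x. if x \<in> A1 then 1 else 2) ws) \<subseteq> {1::nat, 2}"
  by auto

context
  fixes a Y :: 'a
  assumes a: "a \<in> A1" and Y: "Y \<in> A2"
begin

lemma word_rule_left:
  assumes "1 \<le> i" "set ws \<subseteq> A1 \<union> A2"
  shows "f (Y ^ i * a * prod_list ws) = f (Y ^ i) * f (a * prod_list ws)"
proof -
  let ?xs = "Y ^ i # a # ws" and ?is = "2 # 1 # map (\<lambda>x. if x \<in> A1 then 1 else 2) ws"
  have "list_all2 letter ?xs ?is"
    using labelled_word[OF assms(2)] nonunital_subalgebra_power[OF subalgebra2 Y assms(1)] a by simp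
  from cmono_rulesD(1)[OF rules this] show ?thesis
    using set_labels by (simp add: mult.assoc)
qed

lemma word_rule_right:
  assumes "1 \<le> e" "1 \<le> k"
  shows "f (a ^ e * Y ^ k) = f (a ^ e) * f (Y ^ k)"
proof -
  have "list_all2 letter [a ^ e, Y ^ k] [1, 2]"
    using nonunital_subalgebra_power[OF subalgebra1 a assms(1)]
      nonunital_subalgebra_power[OF subalgebra2 Y assms(2)] by simp
  from cmono_rulesD(2)[OF rules this] show ?thesis by simp
qed

lemma word_rule_peak:
  assumes "1 \<le> e" "1 \<le> i" "set ws \<subseteq> A1 \<union> A2"
  shows "f (a ^ e * Y ^ i * a * prod_list ws) =
           (f (Y ^ i) - g (Y ^ i)) * f (a ^ e) * f (a * prod_list ws) + g (Y ^ i) * f (a ^ Suc e * prod_list ws)"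
proof -
  let ?xs = "a ^ e # Y ^ i # a # ws" and ?is = "1 # 2 # 1 # map (\<lambda>x. if x \<in> A1 then 1 else 2) ws"
  have "list_all2 letter ?xs ?is"
    using labelled_word[OF assms(3)] nonunital_subalgebra_power[OF subalgebra1 a assms(1)]
      nonunital_subalgebra_power[OF subalgebra2 Y assms(2)] a by simp
  moreover have "a ^ e * (a * z) = a * (a ^ e * z)" for z
    by (metis mult.assoc power_commutes)
  ultimately show ?thesis
    using cmono_rulesD(3)[OF rules, of ?xs ?is 1] set_labels by (simp add: mult.assoc)
qed

lemma word_sum_rule_peak:
  assumes "1 \<le> i" "word_sum (A1 \<union> A2) T"
  shows "f (a ^ e * Y ^ i * a * T) =
           (f (Y ^ i) - g (Y ^ i)) * f (a ^ e) * f (a * T) + g (Y ^ i) * f (a ^ Suc e * T)"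
  using assms(2)
proof (induction rule: word_sum.induct)
  case (word ws)
  show ?case
  proof (cases "e = 0")
    case True
    then show ?thesis using word_rule_left[OF assms(1) word] by (simp add: f_unital algebra_simps)
  qed (use word_rule_peak[OF _ assms(1) word] in simp)
qed (simp add: distrib_left add algebra_simps)

lemma peak_rule:
  "1 \<le> i \<Longrightarrow> f (a ^ e * Y ^ i * a * (Y * (Y + a * Y) ^ j)) =
           (f (Y ^ i) - g (Y ^ i)) * f (a ^ e) * f (a * (Y * (Y + a * Y) ^ j))
           + g (Y ^ i) * f (a ^ Suc e * (Y * (Y + a * Y) ^ j))"
  by (rule word_sum_rule_peak) (use word_sum_perturbed_power[of a "A1 \<union> A2" Y] a Y in simp_all)

lemma right_rule:
  assumes "1 \<le> k"
  shows "f (a ^ e * Y ^ k) = f (a ^ e) * f (Y ^ k)"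
  using word_rule_right[OF _ assms, of e] by (cases "e = 0") (simp_all add: f_unital)

lemma eta_fps_product:
  defines "T \<equiv> Abs_fps (distr f a)"
  shows "eta_fps (distr f ((1 + a) * Y)) * (T oo psi_fps (distr g Y)) =
           eta_fps (distr f Y) * ((T + fps_shift 1 T) oo psi_fps (distr g Y))"
  using eta_fps_perturbed_product[OF f_additive f_unital peak_rule right_rule]
  by (simp add: T_def distr_def algebra_simps)

lemma eta_fps_product_eq_compose:
  "eta_fps (distr f ((1 + a) * Y)) =
     eta_fps (distr f Y) * (fps_shift 1 (eta_fps (distr f (1 + a))) oo eta_fps (distr g Y))"
proof -
  define T where "T = Abs_fps (distr f a)"
  define S where "S = fps_shift 1 (eta_fps (distr f (1 + a))) oo eta_fps (distr g Y)"
  have "S * (T oo psi_fps (distr g Y)) = (T + fps_shift 1 T) oo psi_fps (distr g Y)"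
    unfolding S_def
    by (rule shift_eta_fps_compose_eta_fps) (use eta_fps_one_plus[OF f_additive f_unital] in \<open>simp add: T_def\<close>)
  then have "eta_fps (distr f ((1 + a) * Y)) * (T oo psi_fps (distr g Y)) =
      eta_fps (distr f Y) * S * (T oo psi_fps (distr g Y))"
    using eta_fps_product by (simp add: T_def mult.assoc)
  moreover have "T oo psi_fps (distr g Y) \<noteq> 0"
    by (metis fps_compose_nth_0 fps_nonzeroI T_def distr_def f_unital fps_nth_Abs_fps one_neq_zero power_0)
  ultimately show ?thesis
    by (simp add: S_def)
qed

end
end

lemma unital_functional_additive: "unital_functional sm f \<Longrightarrow> Modules.additive f"
  by (simp add: unital_functional_def additive.intro)

lemma c_monotone_independent_functionals:
  assumes aps: "alg_prob_space sm \<phi> \<psi>"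
    and indep: "c_monotone_independent sm \<phi> \<psi> {1::nat, 2} (\<lambda>i. if i = 1 then A1 else A2)"
  shows "c_monotone_functional sm \<phi> \<psi> A1 A2" and "c_monotone_functional sm \<psi> \<psi> A1 A2"
proof -
  have "nonunital_subalgebra sm A1" "nonunital_subalgebra sm A2"
    using indep by (auto simp: c_monotone_independent_def dest: bspec[of _ _ 1] bspec[of _ _ 2])
  moreover have "unital_functional sm \<phi>" "unital_functional sm \<psi>"
    using aps by (simp_all add: alg_prob_space_def)
  ultimately show "c_monotone_functional sm \<phi> \<psi> A1 A2" "c_monotone_functional sm \<psi> \<psi> A1 A2"
    using indep by (auto simp: c_monotone_functional_def c_monotone_independent_def
        unital_functional_def intro: unital_functional_additive)
qed

lemma eta_fps_c_monotone_convolution: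
  fixes sm :: "complex \<Rightarrow> 'a::ring_1 \<Rightarrow> 'a"
  assumes aps: "alg_prob_space sm \<phi> \<psi>"
    and indep: "c_monotone_independent sm \<phi> \<psi> {1::nat, 2} (\<lambda>i. if i = 1 then A1 else A2)"
    and X1: "X - 1 \<in> A1" and Y2: "Y \<in> A2"
  shows "eta_fps (distr \<phi> (X * Y)) =
           eta_fps (distr \<phi> Y) * (fps_shift 1 (eta_fps (distr \<phi> X)) oo eta_fps (distr \<psi> Y))"
    and "eta_fps (distr \<psi> (X * Y)) = eta_fps (distr \<psi> X) oo eta_fps (distr \<psi> Y)"
proof -
  interpret phi: c_monotone_functional sm \<phi> \<psi> A1 A2
    by (rule c_monotone_independent_functionals(1)[OF aps indep])
  interpret psi: c_monotone_functional sm \<psi> \<psi> A1 A2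
    by (rule c_monotone_independent_functionals(2)[OF aps indep])
  show "eta_fps (distr \<phi> (X * Y)) =
      eta_fps (distr \<phi> Y) * (fps_shift 1 (eta_fps (distr \<phi> X)) oo eta_fps (distr \<psi> Y))"
    using phi.eta_fps_product_eq_compose[OF X1 Y2] by simp
  define u where "u = eta_fps (distr \<psi> Y)"
  have "eta_fps (distr \<psi> X) oo u = (fps_X * fps_shift 1 (eta_fps (distr \<psi> X))) oo u"
    by (simp only: fps_X_mult_shift_eta_fps)
  also have "\<dots> = u * (fps_shift 1 (eta_fps (distr \<psi> X)) oo u)"
    by (simp add: u_def fps_compose_mult_distrib fps_X_fps_compose_startby0)
  finally show "eta_fps (distr \<psi> (X * Y)) = eta_fps (distr \<psi> X) oo eta_fps (distr \<psi> Y)"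
    using psi.eta_fps_product_eq_compose[OF X1 Y2] by (simp add: u_def)
qed

section \<open>Probability measures on the circle\<close>

lemma Re_divide_one_minus_ge:
  fixes w :: complex
  assumes "norm w < 1"
  shows "Re (w / (1 - w)) \<ge> - norm w / (1 + norm w)"
proof -
  define x where "x = Re w"
  define y where "y = Im w"
  define r where "r = norm w"
  have r2: "r^2 = x^2 + y^2" unfolding r_def x_def y_def by (simp add: cmod_power2)
  have r0: "0 \<le> r" "r < 1" using assms by (simp_all add: r_def)
  have "\<bar>x\<bar> \<le> r" unfolding x_def r_def by (rule abs_Re_le_cmod)
  then have xr: "-r \<le> x" "x \<le> r" by linarith+
  define D where "D = (1 - x)^2 + y^2"
  have D: "D = 1 - 2*x + r^2" unfolding D_def using r2 by (simp add: power2_eq_square algebra_simps)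
  have Dpos: "0 < D"
  proof -
    have "(1 - r)^2 \<le> D" unfolding D using xr by (simp add: power2_eq_square algebra_simps)
    moreover have "0 < (1 - r)^2" using r0 by simp
    ultimately show ?thesis by linarith
  qed
  have re: "Re (w / (1 - w)) = (x - r^2) / D"
    unfolding Re_divide D_def x_def y_def using r2 by (simp add: x_def y_def power2_eq_square algebra_simps)
  have key: "(x - r^2) * (1 + r) + r * D = (1 - r) * (x + r)"
    unfolding D by (simp add: power2_eq_square algebra_simps)
  have "0 \<le> (1 - r) * (x + r)" using r0 xr by simp
  then have "- r * D \<le> (x - r^2) * (1 + r)" using key by linarith
  then have "- r / (1 + r) \<le> (x - r^2) / D"
    using Dpos r0 by (simp add: divide_simps mult.commute)
  then show ?thesis using re by (simp add: r_def)
qed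

lemma nonzero_geometric_sums:
  fixes w :: complex
  assumes "norm w < 1"
  shows "(\<lambda>i. if i = 0 then 0 else w ^ i) sums (w / (1 - w))"
proof -
  have "(\<lambda>n. w * w ^ n) sums (w * (1 / (1 - w)))"
    by (rule sums_mult) (rule geometric_sums[OF assms])
  then have "(\<lambda>n. (\<lambda>i. if i = 0 then 0 else w ^ i) (Suc n)) sums (w / (1 - w))"
    by simp
  then show ?thesis
    by (subst (asm) sums_Suc_iff) simp
qed

context
  fixes M :: "complex measure"
  assumes M: "prob_on_circle M"
begin

interpretation prob_space M
  using M by (simp add: prob_on_circle_def)

lemma borel_measurable_circle: "h \<in> borel_measurable borel \<Longrightarrow> h \<in> borel_measurable M"
proof -
  have "sets M = sets borel"
    using M by (simp add: prob_on_circle_def)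
  then show "h \<in> borel_measurable borel \<Longrightarrow> h \<in> borel_measurable M"
    by (subst measurable_cong_sets[OF _ refl])
qed

lemma AE_norm_eq_1: "AE \<zeta> in M. norm \<zeta> = 1"
proof (rule AE_I')
  show "- sphere (0::complex) 1 \<in> null_sets M"
    using M by (simp add: prob_on_circle_def null_sets_def borel_open)
qed auto

lemma integrable_AE_bounded:
  fixes h :: "complex \<Rightarrow> complex"
  assumes "h \<in> borel_measurable borel" "AE \<zeta> in M. norm (h \<zeta>) \<le> K"
  shows "integrable M h"
  by (rule Bochner_Integration.integrable_bound[of _ "\<lambda>_. K"])
     (use assms in \<open>auto intro: borel_measurable_circle\<close>)

lemma psi_meas_sums:
  assumes z: "norm z < 1"
  shows "(\<lambda>n. psi_fps (moments M) $ n * z ^ n) sums psi_meas M z"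
    and "integrable M (\<lambda>\<zeta>. z * \<zeta> / (1 - z * \<zeta>))"
proof -
  define f where "f i \<zeta> = (if i = 0 then 0 else z ^ i * \<zeta> ^ i)" for i and \<zeta> :: complex
  have f_meas: "f i \<in> borel_measurable borel" for i
    by (cases "i = 0") (simp_all add: f_def [abs_def])
  have f_norm: "norm (f i \<zeta>) = (if i = 0 then 0 else norm z ^ i)" if "norm \<zeta> = 1" for i \<zeta>
    using that by (simp add: f_def norm_mult norm_power)
  have f_int: "integrable M (f i)" for i
    by (rule integrable_AE_bounded[OF f_meas, of _ "norm z ^ i"])
       (use AE_norm_eq_1 in \<open>eventually_elim, simp add: f_norm\<close>)
  have geo: "summable (\<lambda>i. norm z ^ i)"
    using z by simp
  have summable_norm: "AE \<zeta> in M. summable (\<lambda>i. norm (f i \<zeta>))"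
    using AE_norm_eq_1
  proof eventually_elim
    case (elim \<zeta>)
    show ?case by (rule summable_comparison_test'[OF geo, of 0]) (simp add: f_norm[OF elim])
  qed
  have "(\<integral>\<zeta>. norm (f i \<zeta>) \<partial>M) = (if i = 0 then 0 else norm z ^ i)" for i
  proof -
    have "(\<integral>\<zeta>. norm (f i \<zeta>) \<partial>M) = (\<integral>\<zeta>. (if i = 0 then 0 else norm z ^ i) \<partial>M)"
      by (intro integral_cong_AE borel_measurable_circle measurable_compose[OF f_meas borel_measurable_norm])
         (use AE_norm_eq_1 in \<open>simp_all add: f_norm eventually_mono\<close>)
    then show ?thesis by (simp add: prob_space)
  qed
  then have summable_int: "summable (\<lambda>i. \<integral>\<zeta>. norm (f i \<zeta>) \<partial>M)"
    by (simp add: summable_comparison_test'[OF geo, of 0])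
  have series: "AE \<zeta> in M. (\<Sum>i. f i \<zeta>) = z * \<zeta> / (1 - z * \<zeta>)"
    using AE_norm_eq_1
  proof eventually_elim
    case (elim \<zeta>)
    have "norm (z * \<zeta>) < 1" using z elim by (simp add: norm_mult)
    moreover have "(\<lambda>i. f i \<zeta>) = (\<lambda>i. if i = 0 then 0 else (z * \<zeta>) ^ i)"
      by (simp add: fun_eq_iff f_def power_mult_distrib)
    ultimately show ?case
      using nonzero_geometric_sums by (simp add: sums_iff)
  qed
  have meas: "(\<lambda>\<zeta>. z * \<zeta> / (1 - z * \<zeta>)) \<in> borel_measurable M"
    by (rule borel_measurable_circle) simp
  have int_sum: "integrable M (\<lambda>\<zeta>. \<Sum>i. f i \<zeta>)"
    by (rule integrable_suminf[OF f_int summable_norm summable_int])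
  show "integrable M (\<lambda>\<zeta>. z * \<zeta> / (1 - z * \<zeta>))"
    by (rule integrable_cong_AE_imp[OF int_sum meas series])
  have "(\<lambda>i. integral\<^sup>L M (f i)) sums (\<integral>\<zeta>. (\<Sum>i. f i \<zeta>) \<partial>M)"
    by (rule sums_integral[OF f_int summable_norm summable_int])
  moreover have "(\<integral>\<zeta>. (\<Sum>i. f i \<zeta>) \<partial>M) = psi_meas M z"
    unfolding psi_meas_def
    by (rule integral_cong_AE[OF borel_measurable_integrable[OF int_sum] meas series])
  moreover have "integral\<^sup>L M (f i) = psi_fps (moments M) $ i * z ^ i" for i
    by (cases "i = 0") (simp_all add: f_def [abs_def] psi_fps_nth moments_def mult.commute)
  ultimately show "(\<lambda>n. psi_fps (moments M) $ n * z ^ n) sums psi_meas M z"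
    by simp
qed

lemma Re_psi_meas_ge:
  assumes z: "norm z < 1"
  shows "Re (psi_meas M z) \<ge> - norm z / (1 + norm z)"
proof -
  have int: "integrable M (\<lambda>\<zeta>. z * \<zeta> / (1 - z * \<zeta>))"
    by (rule psi_meas_sums(2)[OF z])
  have "(\<integral>\<zeta>. - norm z / (1 + norm z) \<partial>M) \<le> (\<integral>\<zeta>. Re (z * \<zeta> / (1 - z * \<zeta>)) \<partial>M)"
  proof (rule integral_mono_AE)
    show "AE \<zeta> in M. - norm z / (1 + norm z) \<le> Re (z * \<zeta> / (1 - z * \<zeta>))"
      using AE_norm_eq_1
    proof eventually_elim
      case (elim \<zeta>)
      then have "norm (z * \<zeta>) = norm z" by (simp add: norm_mult)
      then show ?case using Re_divide_one_minus_ge[of "z * \<zeta>"] z by simp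
    qed
  qed (use int in simp_all)
  also have "\<dots> = Re (psi_meas M z)"
    unfolding psi_meas_def by (rule integral_Re[OF int])
  finally show ?thesis by (simp add: prob_space)
qed

lemma
  assumes z: "norm z < 1"
  shows one_plus_psi_meas_nonzero: "1 + psi_meas M z \<noteq> 0"
    and norm_eta_meas_less_1: "norm (eta_meas M z) < 1"
proof -
  define p where "p = psi_meas M z"
  have "0 < 1 + norm z"
    by (simp add: add_pos_nonneg)
  then have "norm z / (1 + norm z) < 1 / 2"
    using z by (simp add: pos_divide_less_eq)
  then have Re_p: "Re p > - 1 / 2"
    using Re_psi_meas_ge[OF z] unfolding p_def by linarith
  then show "1 + psi_meas M z \<noteq> 0"
    by (auto simp: p_def complex_eq_iff)
  have "(norm (1 + p))\<^sup>2 = (norm p)\<^sup>2 + 1 + 2 * Re p"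
    by (simp only: cmod_power2) (simp add: power2_eq_square algebra_simps)
  then have "(norm p)\<^sup>2 < (norm (1 + p))\<^sup>2"
    using Re_p by linarith
  then have "norm p < norm (1 + p)"
    by (rule power_less_imp_less_base) simp
  then show "norm (eta_meas M z) < 1"
    by (simp add: eta_meas_def p_def [symmetric] norm_divide divide_less_eq)
qed

lemma fps_conv_radius_psi_fps_moments: "fps_conv_radius (psi_fps (moments M)) \<ge> 1"
  unfolding fps_conv_radius_def
proof (rule conv_radius_geI_ex')
  fix r :: real assume "0 < r" "ereal r < 1"
  then have "norm (of_real r :: complex) < 1" by simp
  from sums_summable[OF psi_meas_sums(1)[OF this]]
  show "summable (\<lambda>n. psi_fps (moments M) $ n * of_real r ^ n)" .
qed

lemma eval_fps_psi_fps_moments: "norm z < 1 \<Longrightarrow> eval_fps (psi_fps (moments M)) z = psi_meas M z"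
  unfolding eval_fps_def using psi_meas_sums(1) by (simp add: sums_iff)

lemma psi_meas_holomorphic: "psi_meas M holomorphic_on ball 0 1"
proof -
  have "ball (0::complex) 1 \<subseteq> eball 0 (fps_conv_radius (psi_fps (moments M)))"
  proof
    fix z :: complex assume "z \<in> ball 0 1"
    then have "ereal (norm z) < 1" by simp
    also have "\<dots> \<le> fps_conv_radius (psi_fps (moments M))" by (rule fps_conv_radius_psi_fps_moments)
    finally show "z \<in> eball 0 (fps_conv_radius (psi_fps (moments M)))" by simp
  qed
  from holomorphic_on_eval_fps[OF this] show ?thesis
    by (rule holomorphic_transform) (simp add: eval_fps_psi_fps_moments)
qed

lemma psi_meas_has_fps_expansion: "psi_meas M has_fps_expansion psi_fps (moments M)"
  unfolding has_fps_expansion_def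
proof
  have "(0::ereal) < 1" by simp
  also have "\<dots> \<le> fps_conv_radius (psi_fps (moments M))" by (rule fps_conv_radius_psi_fps_moments)
  finally show "fps_conv_radius (psi_fps (moments M)) > 0" .
  have "eventually (\<lambda>z. z \<in> ball (0::complex) 1) (nhds 0)"
    by (rule eventually_nhds_in_open) simp_all
  then show "eventually (\<lambda>z. eval_fps (psi_fps (moments M)) z = psi_meas M z) (nhds 0)"
    by eventually_elim (simp add: eval_fps_psi_fps_moments)
qed

lemma eta_meas_has_fps_expansion: "eta_meas M has_fps_expansion eta_fps (moments M)"
proof -
  have "(\<lambda>z. 1 + psi_meas M z) has_fps_expansion 1 + psi_fps (moments M)"
    using has_fps_expansion_add[OF has_fps_expansion_const[of 1] psi_meas_has_fps_expansion] by simp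
  from has_fps_expansion_divide'[OF psi_meas_has_fps_expansion this]
  have "(\<lambda>z. psi_meas M z / (1 + psi_meas M z)) has_fps_expansion psi_fps (moments M) / (1 + psi_fps (moments M))"
    by (simp add: psi_fps_nth)
  then show ?thesis by (simp add: eta_meas_def [abs_def] eta_fps_def)
qed

lemma eta_meas_holomorphic: "eta_meas M holomorphic_on ball 0 1"
  unfolding eta_meas_def [abs_def]
  by (intro holomorphic_intros psi_meas_holomorphic) (use one_plus_psi_meas_nonzero in auto)

lemma eta_meas_ball: "eta_meas M ` ball 0 1 \<subseteq> ball 0 1"
  using norm_eta_meas_less_1 by auto

text \<open>The removable singularity of \<open>\<eta>(w)/w\<close> at \<open>0\<close> is filled by \<open>\<eta>'(0) = moments M 1\<close>.\<close>

lemma eta_meas_over_id_has_fps_expansion: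
  "(\<lambda>w. if w = 0 then moments M 1 else eta_meas M w / w) has_fps_expansion fps_shift 1 (eta_fps (moments M))"
proof (cases "eta_fps (moments M) = 0")
  case True
  have "eventually (\<lambda>w. eval_fps (eta_fps (moments M)) w = eta_meas M w) (nhds 0)"
    using eta_meas_has_fps_expansion by (simp add: has_fps_expansion_def)
  then have "eventually (\<lambda>w. eval_fps 0 w = (if w = 0 then moments M 1 else eta_meas M w / w)) (nhds 0)"
    by eventually_elim (use True eta_fps_nth_1[of "moments M"] in \<open>simp add: eval_fps_def\<close>)
  then show ?thesis
    using True by (simp add: has_fps_expansion_def)
next
  case False
  then have "1 \<le> subdegree (eta_fps (moments M))"
    by (intro subdegree_geI) simp_all
  from has_fps_expansion_shift[OF eta_meas_has_fps_expansion this eta_fps_nth_1 [symmetric]]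
  show ?thesis unfolding power_one_right .
qed

lemma eta_meas_over_id_holomorphic:
  "(\<lambda>w. if w = 0 then moments M 1 else eta_meas M w / w) holomorphic_on ball 0 1"
    (is "?h holomorphic_on _")
proof -
  have "?h analytic_on {0}"
    by (rule has_fps_expansion_imp_analytic_0[OF eta_meas_over_id_has_fps_expansion])
  moreover have "(\<lambda>w. eta_meas M w / w) holomorphic_on (ball 0 1 - {0})"
    by (intro holomorphic_intros holomorphic_on_subset[OF eta_meas_holomorphic]) auto
  then have "?h holomorphic_on (ball 0 1 - {0})"
    by (rule holomorphic_transform) simp
  then have "?h analytic_on (ball 0 1 - {0})"
    by (subst analytic_on_open) auto
  ultimately have "?h analytic_on ((ball 0 1 - {0}) \<union> {0})"
    by (simp only: analytic_on_Un)
  moreover have "(ball (0::complex) 1 - {0}) \<union> {0} = ball 0 1"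
    by auto
  ultimately show ?thesis
    by (metis analytic_imp_holomorphic)
qed

end

section \<open>The analytic convolution identities\<close>

lemma holomorphic_eq_if_same_fps_expansion:
  assumes "f has_fps_expansion F" "g has_fps_expansion F"
    and "f holomorphic_on ball 0 1" "g holomorphic_on ball 0 1" "norm (z::complex) < 1"
  shows "f z = g z"
proof -
  have "(\<lambda>x. f x - g x) has_fps_expansion 0"
    using has_fps_expansion_diff[OF assms(1,2)] by simp
  then have "f z - g z = 0"
    by (rule has_fps_expansion_0_analytic_continuation[of _ "ball 0 1"])
       (use assms in \<open>auto intro: holomorphic_intros\<close>)
  then show ?thesis by simp
qed

lemma eta_meas_compose:
  assumes N1: "prob_on_circle N1" and N2: "prob_on_circle N2" and NC: "prob_on_circle NC"
    and eq: "eta_fps (moments NC) = eta_fps (moments N1) oo eta_fps (moments N2)"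
    and z: "norm z < 1"
  shows "eta_meas NC z = eta_meas N1 (eta_meas N2 z)"
proof -
  have "(eta_meas N1 \<circ> eta_meas N2) has_fps_expansion eta_fps (moments NC)"
    unfolding eq
    by (rule has_fps_expansion_compose[OF eta_meas_has_fps_expansion[OF N1]
          eta_meas_has_fps_expansion[OF N2] eta_fps_nth_0])
  moreover have "(eta_meas N1 \<circ> eta_meas N2) holomorphic_on ball 0 1"
    by (rule holomorphic_on_compose_gen[OF eta_meas_holomorphic[OF N2] eta_meas_holomorphic[OF N1]
          eta_meas_ball[OF N2]])
  ultimately have "eta_meas NC z = (eta_meas N1 \<circ> eta_meas N2) z"
    using holomorphic_eq_if_same_fps_expansion eta_meas_has_fps_expansion[OF NC]
      eta_meas_holomorphic[OF NC] z by blast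
  then show ?thesis by simp
qed

lemma eta_meas_product:
  assumes M1: "prob_on_circle M1" and M2: "prob_on_circle M2" and N2: "prob_on_circle N2"
    and MC: "prob_on_circle MC"
    and eq: "eta_fps (moments MC) =
               eta_fps (moments M2) * (fps_shift 1 (eta_fps (moments M1)) oo eta_fps (moments N2))"
    and z: "norm z < 1"
  shows "eta_meas MC z =
           eta_meas M2 z * (let w = eta_meas N2 z in if w = 0 then moments M1 1 else eta_meas M1 w / w)"
proof -
  define h where "h w = (if w = 0 then moments M1 1 else eta_meas M1 w / w)" for w
  define R where "R x = eta_meas M2 x * (h \<circ> eta_meas N2) x" for x
  have "R has_fps_expansion eta_fps (moments MC)"
    unfolding R_def [abs_def] eq h_def [abs_def]
    by (intro has_fps_expansion_mult eta_meas_has_fps_expansion[OF M2]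
        has_fps_expansion_compose[OF eta_meas_over_id_has_fps_expansion[OF M1]
          eta_meas_has_fps_expansion[OF N2] eta_fps_nth_0])
  moreover have "R holomorphic_on ball 0 1"
    unfolding R_def [abs_def] h_def [abs_def]
    by (intro holomorphic_on_mult eta_meas_holomorphic[OF M2] holomorphic_on_compose_gen[OF
          eta_meas_holomorphic[OF N2] eta_meas_over_id_holomorphic[OF M1] eta_meas_ball[OF N2]])
  ultimately have "eta_meas MC z = R z"
    using holomorphic_eq_if_same_fps_expansion eta_meas_has_fps_expansion[OF MC]
      eta_meas_holomorphic[OF MC] z by blast
  then show ?thesis by (simp add: R_def h_def Let_def)
qed

theorem theorem3p3:
  fixes sm :: "complex \<Rightarrow> 'a::ring_1 \<Rightarrow> 'a"
    and \<phi> \<psi> :: "'a \<Rightarrow> complex"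
    and A1 A2 :: "'a set"
    and X Y :: 'a
  assumes aps: "alg_prob_space sm \<phi> \<psi>"
    and indep: "c_monotone_independent sm \<phi> \<psi> {1::nat, 2} (\<lambda>i. if i = 1 then A1 else A2)"
    and X1: "X - 1 \<in> A1" and Y2: "Y \<in> A2"
  shows
    "eta_fps (distr \<phi> (X * Y)) =
       eta_fps (distr \<phi> Y) * fps_compose (fps_shift 1 (eta_fps (distr \<phi> X))) (eta_fps (distr \<psi> Y))
     \<and> eta_fps (distr \<psi> (X * Y)) = fps_compose (eta_fps (distr \<psi> X)) (eta_fps (distr \<psi> Y))
     \<and> (eta_fps (distr \<psi> Y) = 0 \<longrightarrow>
          eta_fps (distr \<phi> (X * Y)) = fps_const (\<phi> X) * eta_fps (distr \<phi> Y))
     \<and> (\<forall>M1 N1 M2 N2 MC NC.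
          prob_on_circle M1 \<and> prob_on_circle N1 \<and> prob_on_circle M2 \<and> prob_on_circle N2 \<and>
          prob_on_circle MC \<and> prob_on_circle NC \<and>
          moments M1 = distr \<phi> X \<and> moments N1 = distr \<psi> X \<and>
          moments M2 = distr \<phi> Y \<and> moments N2 = distr \<psi> Y \<and>
          moments MC = distr \<phi> (X * Y) \<and> moments NC = distr \<psi> (X * Y) \<longrightarrow>
          (\<forall>z. norm z < 1 \<longrightarrow>
             eta_meas MC z =
               eta_meas M2 z *
                 (let w = eta_meas N2 z in if w = 0 then \<phi> X else eta_meas M1 w / w)
             \<and> eta_meas NC z = eta_meas N1 (eta_meas N2 z)))"
proof (intro conjI impI allI)
  note product = eta_fps_c_monotone_convolution(1)[OF aps indep X1 Y2]
    and compose = eta_fps_c_monotone_convolution(2)[OF aps indep X1 Y2]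
  show "eta_fps (distr \<phi> (X * Y)) =
      eta_fps (distr \<phi> Y) * (fps_shift 1 (eta_fps (distr \<phi> X)) oo eta_fps (distr \<psi> Y))"
    by (fact product)
  show "eta_fps (distr \<psi> (X * Y)) = eta_fps (distr \<psi> X) oo eta_fps (distr \<psi> Y)"
    by (fact compose)
  show "eta_fps (distr \<phi> (X * Y)) = fps_const (\<phi> X) * eta_fps (distr \<phi> Y)"
    if "eta_fps (distr \<psi> Y) = 0"
    using product that eta_fps_nth_1[of "distr \<phi> X"] by (simp add: distr_def mult.commute)
  fix M1 N1 M2 N2 MC NC and z :: complex
  assume circle: "prob_on_circle M1 \<and> prob_on_circle N1 \<and> prob_on_circle M2 \<and> prob_on_circle N2 \<and>
      prob_on_circle MC \<and> prob_on_circle NC \<and>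
      moments M1 = distr \<phi> X \<and> moments N1 = distr \<psi> X \<and>
      moments M2 = distr \<phi> Y \<and> moments N2 = distr \<psi> Y \<and>
      moments MC = distr \<phi> (X * Y) \<and> moments NC = distr \<psi> (X * Y)" and z: "norm z < 1"
  have "moments M1 1 = \<phi> X"
    using circle by (simp add: distr_def)
  moreover have "eta_meas MC z =
      eta_meas M2 z * (let w = eta_meas N2 z in if w = 0 then moments M1 1 else eta_meas M1 w / w)"
    by (rule eta_meas_product) (use circle product z in simp_all)
  ultimately show "eta_meas MC z =
      eta_meas M2 z * (let w = eta_meas N2 z in if w = 0 then \<phi> X else eta_meas M1 w / w)"
    by (simp only:)
  show "eta_meas NC z = eta_meas N1 (eta_meas N2 z)"
    using eta_meas_compose[of N1 N2 NC z] circle compose z by simp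
qed

end
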